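(* Under the standing assumptions, let $\vec v$ be a demand vector with at least four non-zero entries. Then there exists a task $t$ of type 2 with respect to $\vec v$ such that $\vec v$ has at least four non-empty tasks distinct from $t$. Moreover, for any such task $t$, letting $i$ be the intermediate task of $t$ with respect to $\vec v$ and letting $\vec v'$ be the demand vector such that $(\vec v,\vec v')$ is $(i,t)$-adjacent, the task $t$ is of type 2 with intermediate task $i$ with respect to $\vec v'$.
   Context: Standing assumptions: $n\ge 4$, $k\ge 5$, and $f_1,\dots,f_n$ are functions from demand vectors to $[k]$ satisfying the demand (for every demand vector $\vec v$ and task $j$, exactly $v_j$ agents $a$ have $f_a(\vec v)=j$), with maximum switching cost at most $2$. A demand vector is $\vec v=(v_1,\dots,v_k)$ of non-negative integers with $\sum v_j=n$; task $j$ is non-empty in $\vec v$ if $v_j\ge1$. The switching cost of $(\vec v,\vec v')$ is the number of agents $a$ with $f_a(\vec v)\ne f_a(\vec v')$; $\vec v,\vec v'$ are adjacent if $\|\vec v-\vec v'\|_1=2$. An ordered pair $(\vec v_1,\vec v_2)$ is $(s,t)$-adjacent if $s\ne t$ and $\vec v_2$ is obtained from $\vec v_1$ by moving one unit of demand from task $s$ to task $t$. Agent $a$ is $(i,j)$-mobile with respect to $(\vec v_1,\vec v_2)$ if $f_a(\vec v_1)=i$, $f_a(\vec v_2)=j$, $i\ne j$. If $(\vec v_1,\vec v_2)$ is $(s,t)$-adjacent with switching cost $2$, then there is a task $i\notin\{s,t\}$ such that one switching agent is $(s,i)$-mobile and the other is $(i,t)$-mobile; $i$ is called the intermediate task of $(\vec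 v_1,\vec v_2)$. A task $t$ is of type 1 with respect to $\vec v$ if for every task $s\ne t$ non-empty in $\vec v$, the $(s,t)$-adjacent pair starting at $\vec v$ has switching cost $1$. A task $t$ is of type 2 with respect to $\vec v$ if there exist a task $i$ and an agent $a$ such that for every task $s\notin\{i,t\}$ non-empty in $\vec v$, the $(s,t)$-adjacent pair starting at $\vec v$ has switching cost $2$, intermediate task $i$, and $(i,t)$-mobile agent $a$; then $i$ is the intermediate task of $t$ with respect to $\vec v$. *)

theory Defs
  imports Main
begin

text \<open>Agents are 1..n, tasks are 1..k. A demand vector is a function nat => nat,
  zero outside the tasks 1..k, summing to n over the tasks. An assignment is
  f :: agent => demand vector => task.\<close>

definition demand_vec :: "nat \<Rightarrow> nat \<Rightarrow> (nat \<Rightarrow> nat) \<Rightarrow> bool" where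
  "demand_vec n k v \<longleftrightarrow> (\<forall>j. j \<notin> {1..k} \<longrightarrow> v j = 0) \<and> (\<Sum>j\<in>{1..k}. v j) = n"

definition satisfies_demand :: "nat \<Rightarrow> nat \<Rightarrow> (nat \<Rightarrow> (nat \<Rightarrow> nat) \<Rightarrow> nat) \<Rightarrow> bool" where
  "satisfies_demand n k f \<longleftrightarrow> (\<forall>v. demand_vec n k v \<longrightarrow>
      (\<forall>a\<in>{1..n}. f a v \<in> {1..k}) \<and>
      (\<forall>j\<in>{1..k}. card {a\<in>{1..n}. f a v = j} = v j))"

definition switching_cost :: "nat \<Rightarrow> (nat \<Rightarrow> (nat \<Rightarrow> nat) \<Rightarrow> nat) \<Rightarrow> (nat \<Rightarrow> nat) \<Rightarrow> (nat \<Rightarrow> nat) \<Rightarrow> nat" where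
  "switching_cost n f v v' = card {a\<in>{1..n}. f a v \<noteq> f a v'}"

definition adjacent :: "nat \<Rightarrow> (nat \<Rightarrow> nat) \<Rightarrow> (nat \<Rightarrow> nat) \<Rightarrow> bool" where
  "adjacent k v v' \<longleftrightarrow> (\<Sum>j\<in>{1..k}. \<bar>int (v j) - int (v' j)\<bar>) = 2"

definition max_switching_cost_le :: "nat \<Rightarrow> nat \<Rightarrow> (nat \<Rightarrow> (nat \<Rightarrow> nat) \<Rightarrow> nat) \<Rightarrow> nat \<Rightarrow> bool" where
  "max_switching_cost_le n k f c \<longleftrightarrow> (\<forall>v v'. demand_vec n k v \<longrightarrow> demand_vec n k v' \<longrightarrow>
      adjacent k v v' \<longrightarrow> switching_cost n f v v' \<le> c)"

text \<open>The demand vector obtained from v by moving one unit of demand from s to t;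
  (v, move s t v) is (s,t)-adjacent when s, t are distinct tasks and v s >= 1.\<close>
definition move :: "nat \<Rightarrow> nat \<Rightarrow> (nat \<Rightarrow> nat) \<Rightarrow> (nat \<Rightarrow> nat)" where
  "move s t v = v(s := v s - 1, t := v t + 1)"

definition mobile :: "(nat \<Rightarrow> (nat \<Rightarrow> nat) \<Rightarrow> nat) \<Rightarrow> nat \<Rightarrow> nat \<Rightarrow> nat \<Rightarrow> (nat \<Rightarrow> nat) \<Rightarrow> (nat \<Rightarrow> nat) \<Rightarrow> bool" where
  "mobile f a i j v1 v2 \<longleftrightarrow> f a v1 = i \<and> f a v2 = j \<and> i \<noteq> j"

definition intermediate :: "nat \<Rightarrow> nat \<Rightarrow> (nat \<Rightarrow> (nat \<Rightarrow> nat) \<Rightarrow> nat) \<Rightarrow> nat \<Rightarrow> nat \<Rightarrow> nat \<Rightarrow> (nat \<Rightarrow> nat) \<Rightarrow> (nat \<Rightarrow> nat) \<Rightarrow> bool" where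
  "intermediate n k f s t i v1 v2 \<longleftrightarrow> switching_cost n f v1 v2 = 2 \<and> i \<in> {1..k} \<and> i \<notin> {s, t} \<and>
     (\<exists>a\<in>{1..n}. \<exists>b\<in>{1..n}. a \<noteq> b \<and> mobile f a s i v1 v2 \<and> mobile f b i t v1 v2)"

definition type1 :: "nat \<Rightarrow> nat \<Rightarrow> (nat \<Rightarrow> (nat \<Rightarrow> nat) \<Rightarrow> nat) \<Rightarrow> nat \<Rightarrow> (nat \<Rightarrow> nat) \<Rightarrow> bool" where
  "type1 n k f t v \<longleftrightarrow> t \<in> {1..k} \<and>
     (\<forall>s\<in>{1..k}. s \<noteq> t \<and> v s \<ge> 1 \<longrightarrow> switching_cost n f v (move s t v) = 1)"

definition type2_with :: "nat \<Rightarrow> nat \<Rightarrow> (nat \<Rightarrow> (nat \<Rightarrow> nat) \<Rightarrow> nat) \<Rightarrow> nat \<Rightarrow> nat \<Rightarrow> nat \<Rightarrow> (nat \<Rightarrow> nat) \<Rightarrow> bool" where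
  "type2_with n k f t i a v \<longleftrightarrow> t \<in> {1..k} \<and> i \<in> {1..k} \<and> a \<in> {1..n} \<and>
     (\<forall>s\<in>{1..k}. s \<notin> {i, t} \<and> v s \<ge> 1 \<longrightarrow>
        switching_cost n f v (move s t v) = 2 \<and>
        intermediate n k f s t i v (move s t v) \<and>
        mobile f a i t v (move s t v))"

definition type2 :: "nat \<Rightarrow> nat \<Rightarrow> (nat \<Rightarrow> (nat \<Rightarrow> nat) \<Rightarrow> nat) \<Rightarrow> nat \<Rightarrow> (nat \<Rightarrow> nat) \<Rightarrow> bool" where
  "type2 n k f t v \<longleftrightarrow> (\<exists>i a. type2_with n k f t i a v)"

definition nonempty_tasks :: "nat \<Rightarrow> (nat \<Rightarrow> nat) \<Rightarrow> nat set" where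
  "nonempty_tasks k v = {j\<in>{1..k}. v j \<ge> 1}"

end

theory Submission
  imports Defs
begin

text \<open>A unit of demand moved from s to t is carried out either by one agent going from s to t (a direct
  switch) or, the switching cost being at most 2, by an agent going from s to some task j and another
  one going from j to t (a relay through j). The arguments compare composites of such moves that reach
  the same demand vector by different routes: the agents switching along each route are pinned down,
  and no three agents may switch between adjacent vectors. Thus two relays to the same target share
  the intermediate task and the last agent, and a direct switch from s coexists with a relay to the
  same target only if s is that intermediate task, so a target reached by some relay is of type 2.
  Three sources with direct switches to two common targets are impossible, and so are two sources
  with direct switches to a common target when one of them also relays to a second target. With at
  least four non-empty tasks (and an empty task when there are exactly four) this yields a target of
  type 2. After moving a unit from its intermediate task i to t, the relay agents towards t become
  direct switches towards i, and the same exclusions make t again of type 2 through i.\<close>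

lemma move_apply: "move s t u j = (if j = t then u t + 1 else if j = s then u s - 1 else u j)"
  unfolding move_def by auto

lemma card_filter_singleton: "card {x\<in>{p}. P x} = (if P p then 1 else 0)"
proof -
  have "{x\<in>{p}. P x} = (if P p then {p} else {})" by auto
  thus ?thesis by simp
qed

lemma card_filter_doubleton:
  assumes "p \<noteq> q" shows "card {x\<in>{p, q}. P x} = (if P p then 1 else 0) + (if P q then 1 else 0)"
proof -
  have "{x\<in>{p, q}. P x} = (if P p then {p} else {}) \<union> (if P q then {q} else {})" by auto
  thus ?thesis using assms by simp
qed

text \<open>pu, pw (qu, qw) are the tasks of two switching agents before and after a move from s to t;
  the hypotheses are the resulting balance of every task.\<close>
lemma two_switchers_pattern:
  fixes pu pw qu qw s t :: nat
  assumes st: "s \<noteq> t" and dp: "pu \<noteq> pw" and dq: "qu \<noteq> qw"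
    and at_s: "(if pu = s then 1 else 0) + (if qu = s then 1 else 0) = (1::nat) + (if pw = s then 1 else 0) + (if qw = s then 1 else 0)"
    and at_t: "(1::nat) + (if pu = t then 1 else 0) + (if qu = t then 1 else 0) = (if pw = t then 1 else 0) + (if qw = t then 1 else 0)"
    and elsewhere: "\<And>j. j \<noteq> s \<Longrightarrow> j \<noteq> t \<Longrightarrow>
      (if pu = j then 1 else 0) + (if qu = j then (1::nat) else 0) = (if pw = j then 1 else 0) + (if qw = j then 1 else 0)"
  shows "(pu = s \<and> pw = qu \<and> qw = t \<and> qu \<noteq> s \<and> qu \<noteq> t) \<or> (qu = s \<and> qw = pu \<and> pw = t \<and> pu \<noteq> s \<and> pu \<noteq> t)"
  using st dp dq at_s at_t elsewhere[of pu] elsewhere[of qu] by (auto split: if_splits)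

lemma move_via_other_source:
  assumes "u s1 \<ge> 1" "s1 \<noteq> s2" "s1 \<noteq> t" "s2 \<noteq> t"
  shows "move s2 t u = move s2 s1 (move s1 t u)"
  using assms by (intro ext) (auto simp: move_apply)

lemma exists_notin_list:
  assumes "length xs < card S" shows "\<exists>x\<in>S. x \<notin> set xs"
proof (rule ccontr)
  assume "\<not> ?thesis"
  hence "card S \<le> card (set xs)" by (intro card_mono) auto
  thus False using card_length[of xs] assms by linarith
qed

locale bounded_switching =
  fixes n k :: nat and f :: "nat \<Rightarrow> (nat \<Rightarrow> nat) \<Rightarrow> nat"
  assumes demand: "satisfies_demand n k f" and cost_le_2: "max_switching_cost_le n k f 2"
begin

lemma assigned_task_in_range: "demand_vec n k u \<Longrightarrow> p \<in> {1..n} \<Longrightarrow> f p u \<in> {1..k}"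
  using demand unfolding satisfies_demand_def by blast

lemma card_assigned: assumes "demand_vec n k u" shows "card {a\<in>{1..n}. f a u = j} = u j"
proof (cases "j \<in> {1..k}")
  case True thus ?thesis using demand assms unfolding satisfies_demand_def by blast
next
  case False
  hence "{a\<in>{1..n}. f a u = j} = {}" using assigned_task_in_range[OF assms] by fastforce
  moreover have "u j = 0" using assms False unfolding demand_vec_def by blast
  ultimately show ?thesis by simp
qed

lemma demand_vec_move:
  assumes "demand_vec n k u" "s \<in> {1..k}" "t \<in> {1..k}" "s \<noteq> t" "u s \<ge> 1"
  shows "demand_vec n k (move s t u)"
proof -
  have z: "\<forall>j. j \<notin> {1..k} \<longrightarrow> move s t u j = 0"
    using assms unfolding demand_vec_def move_apply by auto
  have e: "\<And>j. int (move s t u j) = int (u j) - (if j = s then 1 else 0) + (if j = t then 1 else 0)"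
    using assms by (auto simp: move_apply)
  have "int (\<Sum>j\<in>{1..k}. move s t u j) = (\<Sum>j\<in>{1..k}. int (move s t u j))" by simp
  also have "\<dots> = (\<Sum>j\<in>{1..k}. int (u j)) - (\<Sum>j\<in>{1..k}. (if j = s then 1 else 0)) + (\<Sum>j\<in>{1..k}. (if j = t then 1 else 0))"
    unfolding e by (simp add: sum.distrib sum_subtractf)
  also have "\<dots> = int (\<Sum>j\<in>{1..k}. u j)" using assms(2,3) by simp
  finally have "(\<Sum>j\<in>{1..k}. move s t u j) = n" using assms(1) unfolding demand_vec_def by linarith
  thus ?thesis using z unfolding demand_vec_def by blast
qed

lemma adjacent_move:
  assumes "s \<in> {1..k}" "t \<in> {1..k}" "s \<noteq> t" "u s \<ge> 1"
  shows "adjacent k u (move s t u)"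
proof -
  have e: "\<And>j. \<bar>int (u j) - int (move s t u j)\<bar> = (if j = s then 1 else 0) + (if j = t then 1 else 0)"
    using assms by (auto simp: move_apply)
  show ?thesis unfolding adjacent_def e using assms by (simp add: sum.distrib)
qed

lemma assigned_balance:
  assumes "demand_vec n k u" "demand_vec n k w" "D \<subseteq> {1..n}"
    and "\<forall>p\<in>{1..n}. p \<notin> D \<longrightarrow> f p w = f p u"
  shows "w j + card {p\<in>D. f p u = j} = u j + card {p\<in>D. f p w = j}"
proof -
  have fin: "finite D" using assms(3) finite_subset by blast
  have 1: "{a\<in>{1..n}. f a u = j} = {a\<in>{1..n}-D. f a u = j} \<union> {p\<in>D. f p u = j}" using assms(3) by auto
  have 2: "{a\<in>{1..n}. f a w = j} = {a\<in>{1..n}-D. f a u = j} \<union> {p\<in>D. f p w = j}" using assms(3,4) by auto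
  have "u j = card {a\<in>{1..n}-D. f a u = j} + card {p\<in>D. f p u = j}"
    using card_assigned[OF assms(1), of j] 1 fin by (simp add: card_Un_disjoint, subst (asm) card_Un_disjoint, auto)
  moreover have "w j = card {a\<in>{1..n}-D. f a u = j} + card {p\<in>D. f p w = j}"
    using card_assigned[OF assms(2), of j] 2 fin by (simp add: card_Un_disjoint, subst (asm) card_Un_disjoint, auto)
  ultimately show ?thesis by simp
qed

lemma leaves_if_demand_drops:
  assumes "demand_vec n k u" "demand_vec n k w" "w j < u j"
  shows "\<exists>p\<in>{1..n}. f p u = j \<and> f p w \<noteq> j"
proof (rule ccontr)
  assume "\<not> ?thesis"
  hence "{a\<in>{1..n}. f a u = j} \<subseteq> {a\<in>{1..n}. f a w = j}" by auto
  hence "card {a\<in>{1..n}. f a u = j} \<le> card {a\<in>{1..n}. f a w = j}" by (intro card_mono) auto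
  thus False using card_assigned[OF assms(1)] card_assigned[OF assms(2)] assms(3) by simp
qed

lemma leaves_if_arrives_same_demand:
  assumes "demand_vec n k u" "demand_vec n k w" "w j = u j"
    and "q \<in> {1..n}" "f q w = j" "f q u \<noteq> j"
  shows "\<exists>p\<in>{1..n}. f p u = j \<and> f p w \<noteq> j"
proof (rule ccontr)
  assume "\<not> ?thesis"
  hence s: "{a\<in>{1..n}. f a u = j} \<subseteq> {a\<in>{1..n}. f a w = j}" by auto
  have "card {a\<in>{1..n}. f a u = j} = card {a\<in>{1..n}. f a w = j}"
    using card_assigned[OF assms(1)] card_assigned[OF assms(2)] assms(3) by simp
  hence "{a\<in>{1..n}. f a u = j} = {a\<in>{1..n}. f a w = j}" using s by (intro card_subset_eq) auto
  thus False using assms(4-6) by blast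
qed

lemma demand_pos_if_assigned: assumes "demand_vec n k u" "p \<in> {1..n}" "f p u = j" shows "u j \<ge> 1"
proof -
  have "{a\<in>{1..n}. f a u = j} \<noteq> {}" using assms by auto
  hence "card {a\<in>{1..n}. f a u = j} > 0" by (subst card_gt_0_iff) auto
  thus ?thesis using card_assigned[OF assms(1), of j] by linarith
qed

definition direct :: "(nat \<Rightarrow> nat) \<Rightarrow> nat \<Rightarrow> nat \<Rightarrow> nat \<Rightarrow> bool" where
  "direct u s t g \<longleftrightarrow> g \<in> {1..n} \<and> f g u = s \<and> f g (move s t u) = t \<and>
     (\<forall>p\<in>{1..n}. p \<noteq> g \<longrightarrow> f p (move s t u) = f p u)"

definition relay :: "(nat \<Rightarrow> nat) \<Rightarrow> nat \<Rightarrow> nat \<Rightarrow> nat \<Rightarrow> nat \<Rightarrow> nat \<Rightarrow> bool" where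
  "relay u s t j b c \<longleftrightarrow> j \<in> {1..k} \<and> j \<noteq> s \<and> j \<noteq> t \<and> b \<in> {1..n} \<and> c \<in> {1..n} \<and> b \<noteq> c \<and>
     f b u = s \<and> f b (move s t u) = j \<and> f c u = j \<and> f c (move s t u) = t \<and>
     (\<forall>p\<in>{1..n}. p \<noteq> b \<longrightarrow> p \<noteq> c \<longrightarrow> f p (move s t u) = f p u)"

lemma directD: assumes "direct u s t g"
  shows "g \<in> {1..n}" "f g u = s" "f g (move s t u) = t"
    "\<And>p. p \<in> {1..n} \<Longrightarrow> p \<noteq> g \<Longrightarrow> f p (move s t u) = f p u"
  using assms unfolding direct_def by auto

lemma relayD: assumes "relay u s t j b c"
  shows "j \<in> {1..k}" "j \<noteq> s" "j \<noteq> t" "b \<in> {1..n}" "c \<in> {1..n}" "b \<noteq> c"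
    "f b u = s" "f b (move s t u) = j" "f c u = j" "f c (move s t u) = t"
    "\<And>p. p \<in> {1..n} \<Longrightarrow> p \<noteq> b \<Longrightarrow> p \<noteq> c \<Longrightarrow> f p (move s t u) = f p u"
  using assms unfolding relay_def by auto

definition switchers :: "(nat \<Rightarrow> nat) \<Rightarrow> (nat \<Rightarrow> nat) \<Rightarrow> nat set" where
  "switchers u w = {p\<in>{1..n}. f p u \<noteq> f p w}"

lemma switching_cost_eq_card_switchers: "switching_cost n f u w = card (switchers u w)"
  unfolding switching_cost_def switchers_def ..

lemma card_switchers_move_le:
  assumes "demand_vec n k u" "s \<in> {1..k}" "t \<in> {1..k}" "s \<noteq> t" "u s \<ge> 1"
  shows "card (switchers u (move s t u)) \<le> 2"
  using cost_le_2 demand_vec_move[OF assms] adjacent_move[of s t u, OF assms(2-5)] assms(1)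
  unfolding max_switching_cost_le_def switching_cost_eq_card_switchers by blast

lemma no_three_switchers:
  assumes "demand_vec n k u" "s \<in> {1..k}" "t \<in> {1..k}" "s \<noteq> t" "u s \<ge> 1"
    and "w = move s t u"
    and "p \<in> {1..n}" "q \<in> {1..n}" "r \<in> {1..n}" "p \<noteq> q" "p \<noteq> r" "q \<noteq> r"
    and "f p u \<noteq> f p w" "f q u \<noteq> f q w" "f r u \<noteq> f r w"
  shows False
proof -
  have "{p, q, r} \<subseteq> switchers u w" using assms(7-15) by (auto simp: switchers_def)
  hence "card {p, q, r} \<le> card (switchers u w)" by (intro card_mono) (auto simp: switchers_def)
  thus False using card_switchers_move_le[OF assms(1-5)] assms(6,10-12) by simp
qed

lemma third_agent_stays:
  assumes "demand_vec n k u" "s \<in> {1..k}" "t \<in> {1..k}" "s \<noteq> t" "u s \<ge> 1"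
    and "w = move s t u"
    and "p \<in> {1..n}" "q \<in> {1..n}" "r \<in> {1..n}" "p \<noteq> q" "p \<noteq> r" "q \<noteq> r"
    and "f p u \<noteq> f p w" "f q u \<noteq> f q w"
  shows "f r u = f r w"
  using no_three_switchers[OF assms] by blast

lemma move_switchers_balance:
  assumes u: "demand_vec n k u" and st: "s \<in> {1..k}" "t \<in> {1..k}" "s \<noteq> t" "u s \<ge> 1"
  shows "card {p\<in>switchers u (move s t u). f p u = j} + (if j = t then 1 else 0) =
         card {p\<in>switchers u (move s t u). f p (move s t u) = j} + (if j = s then 1 else 0)"
proof -
  have "move s t u j + card {p\<in>switchers u (move s t u). f p u = j} =
        u j + card {p\<in>switchers u (move s t u). f p (move s t u) = j}"
    by (rule assigned_balance[OF u demand_vec_move[OF u st]]) (auto simp: switchers_def)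
  thus ?thesis using st by (cases "j = t"; cases "j = s") (simp_all add: move_apply)
qed

lemma direct_if_one_switcher:
  assumes u: "demand_vec n k u" and st: "s \<in> {1..k}" "t \<in> {1..k}" "s \<noteq> t" "u s \<ge> 1"
    and D: "switchers u (move s t u) = {p}"
  shows "direct u s t p"
proof -
  note balance = move_switchers_balance[OF u st, unfolded D card_filter_singleton]
  have "f p u = s" using balance[of s] st(3) by (cases "f p u = s") simp_all
  moreover have "f p (move s t u) = t" using balance[of t] st(3) by (cases "f p (move s t u) = t") simp_all
  moreover have "p \<in> {1..n}" using D unfolding switchers_def by blast
  moreover have "f q (move s t u) = f q u" if "q \<in> {1..n}" "q \<noteq> p" for q
  proof -
    have "q \<notin> switchers u (move s t u)" using D that(2) by simp
    thus ?thesis using that(1) unfolding switchers_def by simp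
  qed
  ultimately show ?thesis unfolding direct_def by blast
qed

lemma relay_if_two_switchers:
  assumes u: "demand_vec n k u" and st: "s \<in> {1..k}" "t \<in> {1..k}" "s \<noteq> t" "u s \<ge> 1"
    and D: "switchers u (move s t u) = {p, q}" and pq: "p \<noteq> q"
  shows "relay u s t (f q u) p q \<or> relay u s t (f p u) q p"
proof -
  note balance = move_switchers_balance[OF u st, unfolded D card_filter_doubleton[OF pq]]
  have "p \<in> switchers u (move s t u)" "q \<in> switchers u (move s t u)" using D by simp_all
  hence sw: "p \<in> {1..n}" "q \<in> {1..n}" "f p u \<noteq> f p (move s t u)" "f q u \<noteq> f q (move s t u)"
    unfolding switchers_def by simp_all
  have others: "\<forall>r\<in>{1..n}. r \<noteq> p \<longrightarrow> r \<noteq> q \<longrightarrow> f r (move s t u) = f r u"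
  proof (intro ballI impI)
    fix r assume "r \<in> {1..n}" "r \<noteq> p" "r \<noteq> q"
    moreover from this(2,3) have "r \<notin> switchers u (move s t u)" using D by simp
    ultimately show "f r (move s t u) = f r u" unfolding switchers_def by simp
  qed
  have range: "f p u \<in> {1..k}" "f q u \<in> {1..k}" using assigned_task_in_range[OF u] sw(1,2) by blast+
  have "(f p u = s \<and> f p (move s t u) = f q u \<and> f q (move s t u) = t \<and> f q u \<noteq> s \<and> f q u \<noteq> t) \<or>
        (f q u = s \<and> f q (move s t u) = f p u \<and> f p (move s t u) = t \<and> f p u \<noteq> s \<and> f p u \<noteq> t)"
  proof (rule two_switchers_pattern[OF st(3) sw(3,4)])
    fix j assume "j \<noteq> s" "j \<noteq> t"
    thus "(if f p u = j then 1 else 0) + (if f q u = j then 1 else 0) =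
      (if f p (move s t u) = j then 1 else 0) + (if f q (move s t u) = j then (1::nat) else 0)"
      using balance[of j] by simp
  qed (use balance[of s] balance[of t] st(3) in simp_all)
  thus ?thesis
  proof (elim disjE)
    assume "f p u = s \<and> f p (move s t u) = f q u \<and> f q (move s t u) = t \<and> f q u \<noteq> s \<and> f q u \<noteq> t"
    hence "relay u s t (f q u) p q" using sw(1,2) others range pq unfolding relay_def by simp
    thus ?thesis ..
  next
    assume "f q u = s \<and> f q (move s t u) = f p u \<and> f p (move s t u) = t \<and> f p u \<noteq> s \<and> f p u \<noteq> t"
    hence "relay u s t (f p u) q p" using sw(1,2) others range pq unfolding relay_def by auto
    thus ?thesis ..
  qed
qed

lemma direct_or_relay:
  assumes u: "demand_vec n k u" and st: "s \<in> {1..k}" "t \<in> {1..k}" "s \<noteq> t" "u s \<ge> 1"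
  shows "(\<exists>g. direct u s t g) \<or> (\<exists>j b c. relay u s t j b c)"
proof -
  define D where "D = switchers u (move s t u)"
  have "move s t u s < u s" using st by (simp add: move_apply)
  then obtain p where "p \<in> {1..n}" "f p u = s" "f p (move s t u) \<noteq> s"
    using leaves_if_demand_drops[OF u demand_vec_move[OF u st]] by blast
  hence "p \<in> D" by (auto simp: D_def switchers_def)
  hence "card D \<noteq> 0" by (auto simp: D_def switchers_def)
  with card_switchers_move_le[OF u st] consider "card D = 1" | "card D = 2" unfolding D_def by linarith
  thus ?thesis
  proof cases
    case 1
    then obtain p where "D = {p}" by (rule card_1_singletonE)
    thus ?thesis using direct_if_one_switcher[OF u st] unfolding D_def by blast
  next
    case 2
    then obtain p q where "D = {p, q}" "p \<noteq> q" by (auto simp: card_2_iff)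
    thus ?thesis using relay_if_two_switchers[OF u st] unfolding D_def by blast
  qed
qed

lemma move_pair_no_three_switchers:
  assumes u: "demand_vec n k u" and k: "s1 \<in> {1..k}" "s2 \<in> {1..k}" "t \<in> {1..k}"
    and d: "s1 \<noteq> s2" "s1 \<noteq> t" "s2 \<noteq> t" and p: "u s1 \<ge> 1" "u s2 \<ge> 1"
    and agents: "a \<in> {1..n}" "b \<in> {1..n}" "c \<in> {1..n}" "a \<noteq> b" "a \<noteq> c" "b \<noteq> c"
    and switch: "f a (move s1 t u) \<noteq> f a (move s2 t u)" "f b (move s1 t u) \<noteq> f b (move s2 t u)"
      "f c (move s1 t u) \<noteq> f c (move s2 t u)"
  shows False
proof -
  have s2: "move s1 t u s2 \<ge> 1" using p d by (simp add: move_apply)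
  show False
    by (rule no_three_switchers[OF demand_vec_move[OF u k(1,3) d(2) p(1)] k(2,1) d(1)[symmetric] s2
          move_via_other_source[of u s1 s2 t, OF p(1) d] agents switch])
qed

lemma direct_relay_same_target:
  assumes u: "demand_vec n k u" and k: "s1 \<in> {1..k}" "s2 \<in> {1..k}" "t \<in> {1..k}"
    and d: "s1 \<noteq> s2" "s1 \<noteq> t" "s2 \<noteq> t" and p: "u s1 \<ge> 1" "u s2 \<ge> 1"
    and D: "direct u s1 t g" and V: "relay u s2 t j b c"
  shows "c = g \<and> j = s1"
proof -
  note g = directD[OF D] and v = relayD[OF V]
  have "c = g"
  proof (rule ccontr)
    assume cg: "c \<noteq> g"
    have gb: "g \<noteq> b" using g(2) v(7) d(1) by auto
    show False
    proof (rule move_pair_no_three_switchers[OF u k d p, of g b c])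
      show "g \<in> {1..n}" "b \<in> {1..n}" "c \<in> {1..n}" using g v by auto
      show "g \<noteq> b" "g \<noteq> c" "b \<noteq> c" using gb cg v(6) by auto
      show "f g (move s1 t u) \<noteq> f g (move s2 t u)" using g(3) v(11)[OF g(1) gb cg[symmetric]] g(2) d(2) by simp
      show "f b (move s1 t u) \<noteq> f b (move s2 t u)" using g(4)[OF v(4) gb[symmetric]] v(7) v(8) v(2) by simp
      show "f c (move s1 t u) \<noteq> f c (move s2 t u)" using g(4)[OF v(5) cg] v(9) v(10) v(3) by simp
    qed
  qed
  thus ?thesis using g(2) v(9) by simp
qed

lemma relay_relay_cross:
  assumes u: "demand_vec n k u" and k: "s1 \<in> {1..k}" "s2 \<in> {1..k}" "t \<in> {1..k}"
    and d: "s1 \<noteq> s2" "s1 \<noteq> t" "s2 \<noteq> t" and p: "u s1 \<ge> 1" "u s2 \<ge> 1"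
    and V1: "relay u s1 t j1 b1 c1" and V2: "relay u s2 t j2 b2 c2" and "c1 \<noteq> c2"
  shows "c1 = b2"
proof (rule ccontr)
  assume h: "c1 \<noteq> b2"
  note v1 = relayD[OF V1] and v2 = relayD[OF V2]
  have bb: "b1 \<noteq> b2" using v1(7) v2(7) d by auto
  have b1d: "f b1 (move s1 t u) \<noteq> f b1 (move s2 t u)"
  proof (cases "b1 = c2")
    case True thus ?thesis using v1(8) v2(10) v1(3) by simp
  next
    case False thus ?thesis using v1(8) v2(11)[OF v1(4) bb False] v1(7) v1(2) by simp
  qed
  have b2d: "f b2 (move s1 t u) \<noteq> f b2 (move s2 t u)"
    using v2(8) v1(11)[OF v2(4) bb[symmetric] h[symmetric]] v2(7) v2(2) by simp
  have c1d: "f c1 (move s1 t u) \<noteq> f c1 (move s2 t u)"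
    using v1(10) v2(11)[OF v1(5) h \<open>c1 \<noteq> c2\<close>] v1(9) v1(3) by simp
  show False
    by (rule move_pair_no_three_switchers[OF u k d p, of b1 b2 c1]) (use v1(4,5,6) v2(4) bb h b1d b2d c1d in auto)
qed

lemma relay_relay_same_target:
  assumes u: "demand_vec n k u" and k: "s1 \<in> {1..k}" "s2 \<in> {1..k}" "t \<in> {1..k}"
    and d: "s1 \<noteq> s2" "s1 \<noteq> t" "s2 \<noteq> t" and p: "u s1 \<ge> 1" "u s2 \<ge> 1"
    and V1: "relay u s1 t j1 b1 c1" and V2: "relay u s2 t j2 b2 c2"
  shows "(c1 = c2 \<and> j1 = j2) \<or> (j1 = s2 \<and> j2 = s1)"
proof (cases "c1 = c2")
  case True
  thus ?thesis using relayD(9)[OF V1] relayD(9)[OF V2] by simp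
next
  case False
  have "c1 = b2" by (rule relay_relay_cross[OF u k d p V1 V2 False])
  moreover have "c2 = b1"
    by (rule relay_relay_cross[OF u k(2,1,3) d(1)[symmetric] d(3,2) p(2,1) V2 V1]) (use False in simp)
  ultimately show ?thesis using relayD(7,9)[OF V1] relayD(7,9)[OF V2] by simp
qed

lemma direct_agent_stays_in_second_move:
  assumes u: "demand_vec n k u" and k1: "s \<in> {1..k}" "T \<in> {1..k}" "s \<noteq> T" "u s \<ge> 1"
    and D: "direct u s T g"
    and k2: "s2 \<in> {1..k}" "T2 \<in> {1..k}" "s2 \<noteq> T2" "move s T u s2 \<ge> 1"
    and Y: "Y = move s2 T2 (move s T u)"
    and rq: "r \<in> {1..n}" "q \<in> {1..n}" "r \<noteq> q" "r \<noteq> g" "q \<noteq> g" "f r Y \<noteq> f r u" "f q Y \<noteq> f q u"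
  shows "f g Y = T"
proof (rule ccontr)
  assume h: "f g Y \<noteq> T"
  note g = directD[OF D]
  show False
  proof (rule no_three_switchers[OF demand_vec_move[OF u k1] k2 Y, of r q g])
    show "r \<in> {1..n}" "q \<in> {1..n}" "g \<in> {1..n}" "r \<noteq> q" "r \<noteq> g" "q \<noteq> g" using rq g(1) by auto
    show "f r (move s T u) \<noteq> f r Y" using g(4)[OF rq(1) rq(4)] rq(6) by simp
    show "f q (move s T u) \<noteq> f q Y" using g(4)[OF rq(2) rq(5)] rq(7) by simp
    show "f g (move s T u) \<noteq> f g Y" using g(3) h by simp
  qed
qed

lemma no_three_other_switchers_in_two_moves:
  assumes u: "demand_vec n k u" and k1: "s \<in> {1..k}" "T \<in> {1..k}" "s \<noteq> T" "u s \<ge> 1"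
    and D: "direct u s T g"
    and k2: "s2 \<in> {1..k}" "T2 \<in> {1..k}" "s2 \<noteq> T2" "move s T u s2 \<ge> 1"
    and Y: "Y = move s2 T2 (move s T u)"
    and rq: "r \<in> {1..n}" "q \<in> {1..n}" "p \<in> {1..n}" "r \<noteq> q" "r \<noteq> p" "q \<noteq> p"
      "r \<noteq> g" "q \<noteq> g" "p \<noteq> g" "f r Y \<noteq> f r u" "f q Y \<noteq> f q u" "f p Y \<noteq> f p u"
  shows False
proof -
  note g = directD[OF D]
  show False
  proof (rule no_three_switchers[OF demand_vec_move[OF u k1] k2 Y, of r q p])
    show "r \<in> {1..n}" "q \<in> {1..n}" "p \<in> {1..n}" "r \<noteq> q" "r \<noteq> p" "q \<noteq> p" using rq by auto
    show "f r (move s T u) \<noteq> f r Y" using g(4)[OF rq(1) rq(7)] rq(10) by simp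
    show "f q (move s T u) \<noteq> f q Y" using g(4)[OF rq(2) rq(8)] rq(11) by simp
    show "f p (move s T u) \<noteq> f p Y" using g(4)[OF rq(3) rq(9)] rq(12) by simp
  qed
qed

lemma direct_agent_switches_in_two_moves:
  assumes u: "demand_vec n k u" and k1: "s \<in> {1..k}" "T \<in> {1..k}" "s \<noteq> T" "u s \<ge> 1"
    and D: "direct u s T g"
    and k2: "s2 \<in> {1..k}" "T2 \<in> {1..k}" "s2 \<noteq> T2" "move s T u s2 \<ge> 1"
    and Y: "Y = move s2 T2 (move s T u)"
    and distinct: "s2 \<noteq> s" "s2 \<noteq> T" "T2 \<noteq> s"
  shows "f g Y \<noteq> f g u"
proof
  assume h: "f g Y = f g u"
  have dY: "demand_vec n k Y" unfolding Y by (rule demand_vec_move[OF demand_vec_move[OF u k1] k2])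
  have "Y s < u s" "Y s2 < u s2" unfolding Y using k1(3,4) k2(3,4) distinct by (auto simp: move_apply)
  then obtain r q where r: "r \<in> {1..n}" "f r u = s" "f r Y \<noteq> s" and q: "q \<in> {1..n}" "f q u = s2" "f q Y \<noteq> s2"
    using leaves_if_demand_drops[OF u dY] by meson
  have "f g Y = T"
    by (rule direct_agent_stays_in_second_move[OF u k1 D k2 Y r(1) q(1)]) (use r q h distinct(1) in auto)
  thus False using h directD(2)[OF D] k1(3) by simp
qed

lemma direct_square_same_agent:
  assumes u: "demand_vec n k u" and kk: "x \<in> {1..k}" "y \<in> {1..k}" "c \<in> {1..k}" "d \<in> {1..k}"
    and ds: "x \<noteq> y" "x \<noteq> c" "x \<noteq> d" "y \<noteq> c" "y \<noteq> d" "c \<noteq> d"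
    and px: "u x \<ge> 1" and py: "u y \<ge> 1"
    and Dxc: "direct u x c gxc" and Dxd: "direct u x d gxd" and Dyc: "direct u y c gyc" and Dyd: "direct u y d gyd"
    and Y: "Y = move y d (move x c u)"
  shows "gxd = gxc"
proof (rule ccontr)
  assume h: "gxd \<noteq> gxc"
  have Y2: "Y = move y c (move x d u)" unfolding Y using ds by (intro ext) (auto simp: move_apply)
  have Y3: "Y = move x d (move y c u)" unfolding Y using ds by (intro ext) (auto simp: move_apply)
  have Y4: "Y = move x c (move y d u)" unfolding Y using ds by (intro ext) (auto simp: move_apply)
  have m: "move x c u y \<ge> 1" "move x d u y \<ge> 1" "move y c u x \<ge> 1" "move y d u x \<ge> 1"
    using ds px py by (auto simp: move_apply)
  note gxc = directD[OF Dxc] and gxd = directD[OF Dxd] and gyc = directD[OF Dyc] and gyd = directD[OF Dyd]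
  have nx: "gxc \<noteq> gyc" "gxc \<noteq> gyd" "gxd \<noteq> gyc" "gxd \<noteq> gyd"
    using gxc(2) gxd(2) gyc(2) gyd(2) ds by auto
  have Inxc: "f gxc Y \<noteq> f gxc u"
    by (rule direct_agent_switches_in_two_moves[OF u kk(1,3) ds(2) px Dxc kk(2,4) ds(5) m(1) Y]) (use ds in auto)
  have Inxd: "f gxd Y \<noteq> f gxd u"
    by (rule direct_agent_switches_in_two_moves[OF u kk(1,4) ds(3) px Dxd kk(2,3) ds(4) m(2) Y2]) (use ds in auto)
  have Inyc: "f gyc Y \<noteq> f gyc u"
    by (rule direct_agent_switches_in_two_moves[OF u kk(2,3) ds(4) py Dyc kk(1,4) ds(3) m(3) Y3]) (use ds in auto)
  have "f gyc Y = c"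
    by (rule direct_agent_stays_in_second_move[OF u kk(2,3) ds(4) py Dyc kk(1,4) ds(3) m(3) Y3 gxc(1) gxd(1)])
      (use h nx Inxc Inxd in auto)
  moreover have "f gyd Y = d"
    by (rule direct_agent_stays_in_second_move[OF u kk(2,4) ds(5) py Dyd kk(1,3) ds(2) m(4) Y4 gxc(1) gxd(1)])
      (use h nx Inxc Inxd in auto)
  ultimately have "gyc \<noteq> gyd" using ds by auto
  show False
    by (rule no_three_other_switchers_in_two_moves[OF u kk(2,4) ds(5) py Dyd kk(1,3) ds(2) m(4) Y4 gxc(1) gxd(1) gyc(1)])
      (use h nx Inxc Inxd Inyc \<open>gyc \<noteq> gyd\<close> in auto)
qed

lemma direct_square:
  assumes u: "demand_vec n k u" and kk: "x \<in> {1..k}" "y \<in> {1..k}" "c \<in> {1..k}" "d \<in> {1..k}"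
    and ds: "x \<noteq> y" "x \<noteq> c" "x \<noteq> d" "y \<noteq> c" "y \<noteq> d" "c \<noteq> d"
    and px: "u x \<ge> 1" and py: "u y \<ge> 1"
    and Dxc: "direct u x c gxc" and Dxd: "direct u x d gxd" and Dyc: "direct u y c gyc" and Dyd: "direct u y d gyd"
    and Y: "Y = move y d (move x c u)"
  shows "f gxc Y \<in> {c, d}" "f gyc Y \<in> {c, d}" "f gxc Y \<noteq> f gyc Y"
    "\<And>p. p \<in> {1..n} \<Longrightarrow> p \<noteq> gxc \<Longrightarrow> p \<noteq> gyc \<Longrightarrow> f p Y = f p u"
proof -
  have Y2: "Y = move y c (move x d u)" unfolding Y using ds by (intro ext) (auto simp: move_apply)
  have Y3: "Y = move x d (move y c u)" unfolding Y using ds by (intro ext) (auto simp: move_apply)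
  have Y4: "Y = move x c (move y d u)" unfolding Y using ds by (intro ext) (auto simp: move_apply)
  have m: "move x c u y \<ge> 1" "move x d u y \<ge> 1" "move y c u x \<ge> 1"
    using ds px py by (auto simp: move_apply)
  have x_agent: "gxd = gxc" by (rule direct_square_same_agent[OF u kk ds px py Dxc Dxd Dyc Dyd Y])
  have "gyc = gyd"
    by (rule direct_square_same_agent[OF u kk(2,1,4,3) _ _ _ _ _ _ py px Dyd Dyc Dxd Dxc Y4]) (use ds in auto)
  note gxc = directD[OF Dxc] and gyc = directD[OF Dyc]
  have nx: "gxc \<noteq> gyc" using gxc(2) gyc(2) ds by auto
  have Inyc: "f gyc Y \<noteq> f gyc u"
    by (rule direct_agent_switches_in_two_moves[OF u kk(2,3) ds(4) py Dyc kk(1,4) ds(3) m(3) Y3]) (use ds in auto)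
  show others: "\<And>p. p \<in> {1..n} \<Longrightarrow> p \<noteq> gxc \<Longrightarrow> p \<noteq> gyc \<Longrightarrow> f p Y = f p u"
  proof (rule ccontr)
    fix p assume p: "p \<in> {1..n}" "p \<noteq> gxc" "p \<noteq> gyc" "f p Y \<noteq> f p u"
    have "f gxc Y = c"
      by (rule direct_agent_stays_in_second_move[OF u kk(1,3) ds(2) px Dxc kk(2,4) ds(5) m(1) Y p(1) gyc(1)])
        (use p nx Inyc in auto)
    moreover have "f gxd Y = d"
      by (rule direct_agent_stays_in_second_move[OF u kk(1,4) ds(3) px Dxd kk(2,3) ds(4) m(2) Y2 p(1) gyc(1)])
        (use p nx Inyc x_agent in auto)
    ultimately show False using x_agent ds by auto
  qed
  have dY: "demand_vec n k Y" unfolding Y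
    by (rule demand_vec_move[OF demand_vec_move[OF u kk(1,3) ds(2) px] kk(2,4) ds(5) m(1)])
  have "u c < Y c" "u d < Y d" unfolding Y using ds by (auto simp: move_apply)
  then obtain ac ad where ac: "ac \<in> {1..n}" "f ac Y = c" "f ac u \<noteq> c" and ad: "ad \<in> {1..n}" "f ad Y = d" "f ad u \<noteq> d"
    using leaves_if_demand_drops[OF dY u] by meson
  have "ac = gxc \<or> ac = gyc" "ad = gxc \<or> ad = gyc" using others ac ad by fastforce+
  thus "f gxc Y \<in> {c, d}" "f gyc Y \<in> {c, d}" "f gxc Y \<noteq> f gyc Y" using ac ad ds by auto
qed

lemma no_direct_triangle:
  assumes u: "demand_vec n k u"
    and sources: "a \<in> nonempty_tasks k u" "b \<in> nonempty_tasks k u" "e \<in> nonempty_tasks k u"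
    and targets: "c \<in> {1..k}" "d \<in> {1..k}" and distinct: "distinct [a, b, e, c, d]"
    and direct: "\<And>s t. s \<in> {a, b, e} \<Longrightarrow> t \<in> {c, d} \<Longrightarrow> \<exists>g. direct u s t g"
  shows False
proof -
  have kk: "a \<in> {1..k}" "b \<in> {1..k}" "e \<in> {1..k}" "c \<in> {1..k}" "d \<in> {1..k}"
    and pa: "u a \<ge> 1" and pb: "u b \<ge> 1" and pe: "u e \<ge> 1"
    using sources targets by (auto simp: nonempty_tasks_def)
  have ds: "a \<noteq> b" "a \<noteq> e" "b \<noteq> e" "a \<noteq> c" "a \<noteq> d" "b \<noteq> c" "b \<noteq> d" "e \<noteq> c" "e \<noteq> d" "c \<noteq> d"
    using distinct by auto
  obtain gac where Dac: "direct u a c gac" using direct by blast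
  obtain gad where Dad: "direct u a d gad" using direct by blast
  obtain gbc where Dbc: "direct u b c gbc" using direct by blast
  obtain gbd where Dbd: "direct u b d gbd" using direct by blast
  obtain gec where Dec: "direct u e c gec" using direct by blast
  obtain ged where Ded: "direct u e d ged" using direct by blast
  define Y1 where "Y1 = move b d (move a c u)"
  define Y2 where "Y2 = move e d (move b c u)"
  define Y3 where "Y3 = move e d (move a c u)"
  note s1 = direct_square[OF u kk(1,2,4,5) ds(1,4,5,6,7,10) pa pb Dac Dad Dbc Dbd Y1_def]
  note s2 = direct_square[OF u kk(2,3,4,5) ds(3,6,7,8,9,10) pb pe Dbc Dbd Dec Ded Y2_def]
  note s3 = direct_square[OF u kk(1,3,4,5) ds(2,4,5,8,9,10) pa pe Dac Dad Dec Ded Y3_def]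
  note gac = directD[OF Dac] and gbc = directD[OF Dbc] and gec = directD[OF Dec]
  have n: "gac \<noteq> gbc" "gac \<noteq> gec" "gbc \<noteq> gec" using gac(2) gbc(2) gec(2) ds by auto
  have dY1: "demand_vec n k Y1" unfolding Y1_def
    by (rule demand_vec_move[OF demand_vec_move[OF u kk(1,4) ds(4) pa] kk(2,5) ds(7)]) (use ds pb in \<open>simp add: move_apply\<close>)
  have dY2: "demand_vec n k Y2" unfolding Y2_def
    by (rule demand_vec_move[OF demand_vec_move[OF u kk(2,4) ds(6) pb] kk(3,5) ds(9)]) (use ds pe in \<open>simp add: move_apply\<close>)
  have e12: "Y2 = move e a Y1" unfolding Y1_def Y2_def using ds pa pb pe by (intro ext) (auto simp: move_apply)
  have e13: "Y3 = move e b Y1" unfolding Y1_def Y3_def using ds pa pb pe by (intro ext) (auto simp: move_apply)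
  have e23: "Y3 = move a b Y2" unfolding Y2_def Y3_def using ds pa pb pe by (intro ext) (auto simp: move_apply)
  have p1: "Y1 e \<ge> 1" "Y2 a \<ge> 1" unfolding Y1_def Y2_def using ds pa pe by (auto simp: move_apply)
  have f1: "f gac Y2 = a" "f gec Y1 = e" "f gbc Y3 = b"
    using s1(4)[OF gec(1)] s2(4)[OF gac(1)] s3(4)[OF gbc(1)] n gac(2) gbc(2) gec(2) by auto
  txt \<open>Between two of the squares the direct agent not involved in both keeps its task; hence
    the three agents would take pairwise distinct values in {c, d}.\<close>
  have c12: "f gbc Y1 = f gbc Y2"
    by (rule third_agent_stays[OF dY1 kk(3,1) ds(2)[symmetric] p1(1) e12, of gac gec])
      (use gac(1) gbc(1) gec(1) n s1(1) s2(2) f1 ds in auto)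
  have c13: "f gac Y1 = f gac Y3"
    by (rule third_agent_stays[OF dY1 kk(3,2) ds(3)[symmetric] p1(1) e13, of gbc gec])
      (use gac(1) gbc(1) gec(1) n s1(2) s3(2) f1 ds in auto)
  have c23: "f gec Y2 = f gec Y3"
    by (rule third_agent_stays[OF dY2 kk(1,2) ds(1) p1(2) e23, of gbc gac])
      (use gac(1) gbc(1) gec(1) n s2(1) s3(1) f1 ds in auto)
  show False using s1(1,2,3) s2(1,2,3) s3(1,2,3) c12 c13 c23 by auto
qed

lemma direct_pair_relay_switchers:
  assumes u: "demand_vec n k u" and kk: "x \<in> {1..k}" "y \<in> {1..k}" "E \<in> {1..k}" "T \<in> {1..k}"
    and ds: "x \<noteq> y" "x \<noteq> E" "x \<noteq> T" "y \<noteq> E" "y \<noteq> T" "E \<noteq> T"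
    and px: "u x \<ge> 1" and py: "u y \<ge> 1"
    and Dx: "direct u x E gx" and Dy: "direct u y E gy" and V: "relay u x T i b al"
    and iy: "i \<noteq> y" and iE: "i \<noteq> E"
    and Y: "Y = move y T (move x E u)"
  shows "\<And>p. p \<in> {1..n} \<Longrightarrow> p \<noteq> gx \<Longrightarrow> p \<noteq> gy \<Longrightarrow> f p Y = f p u"
proof (rule ccontr)
  have Y2: "Y = move x T (move y E u)" unfolding Y using ds by (intro ext) (auto simp: move_apply)
  have Y3: "Y = move y E (move x T u)" unfolding Y using ds by (intro ext) (auto simp: move_apply)
  have m: "move x E u y \<ge> 1" "move y E u x \<ge> 1" "move x T u y \<ge> 1"
    using ds px py by (auto simp: move_apply)
  have dY: "demand_vec n k Y" unfolding Y
    by (rule demand_vec_move[OF demand_vec_move[OF u kk(1,3) ds(2) px] kk(2,4) ds(5) m(1)])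
  have dXT: "demand_vec n k (move x T u)" by (rule demand_vec_move[OF u kk(1,4) ds(3) px])
  note v = relayD[OF V] and gx = directD[OF Dx] and gy = directD[OF Dy]
  have Yi: "Y i = u i" unfolding Y using ds iy iE v(2,3) by (auto simp: move_apply)
  have Inx: "f gx Y \<noteq> f gx u"
    by (rule direct_agent_switches_in_two_moves[OF u kk(1,3) ds(2) px Dx kk(2,4) ds(5) m(1) Y]) (use ds in auto)
  have Iny: "f gy Y \<noteq> f gy u"
    by (rule direct_agent_switches_in_two_moves[OF u kk(2,3) ds(4) py Dy kk(1,4) ds(3) m(2) Y2]) (use ds in auto)
  have nn: "gx \<noteq> gy" "al \<noteq> gx" "al \<noteq> gy" "b \<noteq> gy" using gx(2) gy(2) v(7,9) v(2) iy ds by auto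
  fix r assume r: "r \<in> {1..n}" "r \<noteq> gx" "r \<noteq> gy" "f r Y \<noteq> f r u"
  have ex: "f gx Y = E"
    by (rule direct_agent_stays_in_second_move[OF u kk(1,3) ds(2) px Dx kk(2,4) ds(5) m(1) Y r(1) gy(1)]) (use r nn Iny in auto)
  have ey: "f gy Y = E"
    by (rule direct_agent_stays_in_second_move[OF u kk(2,3) ds(4) py Dy kk(1,4) ds(3) m(2) Y2 r(1) gx(1)]) (use r nn Inx in auto)
  have others: "f p Y = f p u" if p: "p \<in> {1..n}" "p \<noteq> gx" "p \<noteq> gy" "p \<noteq> r" for p
  proof (rule ccontr)
    assume "f p Y \<noteq> f p u"
    show False
      by (rule no_three_other_switchers_in_two_moves[OF u kk(1,3) ds(2) px Dx kk(2,4) ds(5) m(1) Y r(1) p(1) gy(1)])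
        (use r p nn Iny \<open>f p Y \<noteq> f p u\<close> in auto)
  qed
  have "u T < Y T" unfolding Y using ds by (simp add: move_apply)
  then obtain q where q: "q \<in> {1..n}" "f q Y = T" "f q u \<noteq> T" using leaves_if_demand_drops[OF dY u] by blast
  have "q \<noteq> gx" "q \<noteq> gy" using q(2) ex ey ds(6) by auto
  hence "q = r" using others[OF q(1)] q(2,3) by fastforce
  hence rT: "f r Y = T" using q by simp
  show False
  proof (cases "al = r")
    case True
    obtain p where p: "p \<in> {1..n}" "f p Y = i" "f p u \<noteq> i"
      using leaves_if_arrives_same_demand[OF dY u Yi[symmetric] v(5) v(9)] rT True v(3) by auto
    show False using others[OF p(1)] p ex ey rT iE v(3) by (cases "p = gx"; cases "p = gy"; cases "p = r") auto
  next
    case False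
    have alY: "f al Y = i" using others[OF v(5)] nn False v(9) by simp
    have gxX: "f gx (move x T u) \<noteq> E"
    proof (cases "gx = b")
      case True thus ?thesis using v(8) iE by simp
    next
      case False thus ?thesis using v(11)[OF gx(1) False nn(2)[symmetric]] gx(2) ds(2) by simp
    qed
    show False
      by (rule no_three_switchers[OF dXT kk(2,3) ds(4) m(3) Y3, of al gy gx])
        (use v(5,10,3) gx(1) gy(1) nn alY ex ey gxX v(11)[OF gy(1) nn(4)[symmetric] nn(3)[symmetric]] gy(2) ds(4) in auto)
  qed
qed

lemma no_direct_pair_with_relay:
  assumes u: "demand_vec n k u" and kk: "x \<in> {1..k}" "y \<in> {1..k}" "E \<in> {1..k}" "T \<in> {1..k}"
    and ds: "x \<noteq> y" "x \<noteq> E" "x \<noteq> T" "y \<noteq> E" "y \<noteq> T" "E \<noteq> T"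
    and px: "u x \<ge> 1" and py: "u y \<ge> 1"
    and Dx: "direct u x E gx" and Dy: "direct u y E gy" and V: "relay u x T i b al"
    and iy: "i \<noteq> y" and iE: "i \<noteq> E"
  shows False
proof -
  define Y where "Y = move y T (move x E u)"
  note Y = Y_def
  have Y2: "Y = move x T (move y E u)" unfolding Y using ds by (intro ext) (auto simp: move_apply)
  have Y3: "Y = move y E (move x T u)" unfolding Y using ds by (intro ext) (auto simp: move_apply)
  have m: "move x E u y \<ge> 1" "move y E u x \<ge> 1" "move x T u y \<ge> 1"
    using ds px py by (auto simp: move_apply)
  have dY: "demand_vec n k Y" unfolding Y
    by (rule demand_vec_move[OF demand_vec_move[OF u kk(1,3) ds(2) px] kk(2,4) ds(5) m(1)])
  have dXT: "demand_vec n k (move x T u)" by (rule demand_vec_move[OF u kk(1,4) ds(3) px])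
  note v = relayD[OF V] and gx = directD[OF Dx] and gy = directD[OF Dy]
  have Yi: "Y i = u i" unfolding Y using ds iy iE v(2,3) by (auto simp: move_apply)
  have Inx: "f gx Y \<noteq> f gx u"
    by (rule direct_agent_switches_in_two_moves[OF u kk(1,3) ds(2) px Dx kk(2,4) ds(5) m(1) Y]) (use ds in auto)
  have Iny: "f gy Y \<noteq> f gy u"
    by (rule direct_agent_switches_in_two_moves[OF u kk(2,3) ds(4) py Dy kk(1,4) ds(3) m(2) Y2]) (use ds in auto)
  have nn: "gx \<noteq> gy" "al \<noteq> gx" "al \<noteq> gy" "b \<noteq> gy" using gx(2) gy(2) v(7,9) v(2) iy ds by auto
  note others = direct_pair_relay_switchers[OF u kk ds px py Dx Dy V iy iE Y]
  have alY: "f al Y = i" using others[OF v(5)] nn v(9) by simp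
  have gyX: "f gy (move x T u) = y" using v(11)[OF gy(1) nn(4)[symmetric] nn(3)[symmetric]] gy(2) by simp
  have gxX: "f gx (move x T u) \<noteq> f gx Y"
  proof (cases "gx = b")
    case True
    have "f gx Y \<noteq> i"
    proof
      assume h: "f gx Y = i"
      obtain p where p: "p \<in> {1..n}" "f p u = i" "f p Y \<noteq> i"
        using leaves_if_arrives_same_demand[OF u dY Yi gx(1) h] gx(2) v(2) by auto
      show False using others[OF p(1)] p gx(2) gy(2) v(2) iy by (cases "p = gx"; cases "p = gy") auto
    qed
    thus ?thesis using True v(8) by simp
  next
    case False thus ?thesis using v(11)[OF gx(1) False nn(2)[symmetric]] gx(2) Inx by simp
  qed
  show False
    by (rule no_three_switchers[OF dXT kk(2,3) ds(4) m(3) Y3, of al gy gx])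
      (use v(5,10,3) gx(1) gy(1) nn alY gyX gxX Iny gy(2) in auto)
qed

lemma switchers_of_direct:
  assumes D: "direct u s t g" and "s \<noteq> t" shows "switchers u (move s t u) = {g}"
proof (intro equalityI subsetI)
  fix p assume "p \<in> switchers u (move s t u)"
  thus "p \<in> {g}" using directD(4)[OF D, of p] unfolding switchers_def by auto
next
  fix p assume "p \<in> {g}"
  thus "p \<in> switchers u (move s t u)" using directD(1-3)[OF D] \<open>s \<noteq> t\<close> unfolding switchers_def by simp
qed

lemma switchers_of_relay:
  assumes V: "relay u s t j b c" shows "switchers u (move s t u) = {b, c}"
proof (intro equalityI subsetI)
  fix p assume "p \<in> switchers u (move s t u)"
  thus "p \<in> {b, c}" using relayD(11)[OF V, of p] unfolding switchers_def by auto
next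
  fix p assume "p \<in> {b, c}"
  thus "p \<in> switchers u (move s t u)" using relayD(2-5,7-10)[OF V] unfolding switchers_def by auto
qed

lemma intermediate_of_relay:
  assumes V: "relay u s t j b c"
  shows "switching_cost n f u (move s t u) = 2" "intermediate n k f s t j u (move s t u)"
    "mobile f c j t u (move s t u)"
proof -
  note v = relayD[OF V]
  show cost: "switching_cost n f u (move s t u) = 2"
    using switchers_of_relay[OF V] v(6) by (simp add: switching_cost_eq_card_switchers)
  have "mobile f b s j u (move s t u)" using v(2,7,8) unfolding mobile_def by simp
  moreover show "mobile f c j t u (move s t u)" using v(3,9,10) unfolding mobile_def by simp
  ultimately show "intermediate n k f s t j u (move s t u)"
    using cost v(1-6) unfolding intermediate_def by blast
qed

lemma type2_with_if_relays:
  assumes "t \<in> {1..k}" "i \<in> {1..k}" "c \<in> {1..n}"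
    and "\<forall>s\<in>{1..k}. s \<noteq> i \<longrightarrow> s \<noteq> t \<longrightarrow> u s \<ge> 1 \<longrightarrow> (\<exists>b. relay u s t i b c)"
  shows "type2_with n k f t i c u"
  unfolding type2_with_def using assms intermediate_of_relay by blast

lemma relay_if_type2_with:
  assumes u: "demand_vec n k u" and h: "type2_with n k f t i a u"
    and s: "s \<in> {1..k}" "s \<noteq> i" "s \<noteq> t" "u s \<ge> 1"
  shows "\<exists>b. relay u s t i b a"
proof -
  have t: "t \<in> {1..k}" and a: "a \<in> {1..n}" using h unfolding type2_with_def by auto
  have cost: "switching_cost n f u (move s t u) = 2" and "mobile f a i t u (move s t u)"
    using h s unfolding type2_with_def by auto
  hence ma: "f a u = i" "f a (move s t u) = t" "i \<noteq> t" unfolding mobile_def by auto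
  from direct_or_relay[OF u s(1) t s(3) s(4)] show ?thesis
  proof
    assume "\<exists>g. direct u s t g"
    then obtain g where "direct u s t g" ..
    hence "switching_cost n f u (move s t u) = 1"
      using switchers_of_direct s(3) by (simp add: switching_cost_eq_card_switchers)
    thus ?thesis using cost by simp
  next
    assume "\<exists>j b c. relay u s t j b c"
    then obtain j b c where V: "relay u s t j b c" by blast
    note v = relayD[OF V]
    have "a = b \<or> a = c" using v(11)[OF a] ma by auto
    moreover have "a \<noteq> b" using ma v(7) s(2) by auto
    ultimately have "a = c" by simp
    hence "j = i" using v(9) ma by simp
    thus ?thesis using V \<open>a = c\<close> by blast
  qed
qed

lemma type2_with_of_relay:
  assumes u: "demand_vec n k u" and t: "t \<in> {1..k}"
    and s0: "s0 \<in> {1..k}" "s0 \<noteq> t" "u s0 \<ge> 1" and V0: "relay u s0 t j b0 c0"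
  shows "type2_with n k f t j c0 u"
proof (rule type2_with_if_relays[OF t relayD(1,5)[OF V0]], intro ballI impI)
  fix s assume s: "s \<in> {1..k}" "s \<noteq> j" "s \<noteq> t" "u s \<ge> 1"
  show "\<exists>b. relay u s t j b c0"
  proof (cases "s = s0")
    case True
    thus ?thesis using V0 by blast
  next
    case False
    from direct_or_relay[OF u s(1) t s(3) s(4)] show ?thesis
    proof
      assume "\<exists>g. direct u s t g"
      then obtain g where "direct u s t g" ..
      thus ?thesis
        using direct_relay_same_target[OF u s(1) s0(1) t False s(3) s0(2) s(4) s0(3) _ V0] s(2) by auto
    next
      assume "\<exists>j' b c. relay u s t j' b c"
      then obtain js bs cs where Vs: "relay u s t js bs cs" by blast
      have "cs = c0 \<and> js = j"
        using relay_relay_same_target[OF u s0(1) s(1) t False[symmetric] s0(2) s(3) s0(3) s(4) V0 Vs] s(2) by auto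
      thus ?thesis using Vs by blast
    qed
  qed
qed

lemma type2_or_all_direct:
  assumes u: "demand_vec n k u" and t: "t \<in> {1..k}"
  shows "type2 n k f t u \<or> (\<forall>s\<in>nonempty_tasks k u - {t}. \<exists>g. direct u s t g)"
proof (rule disjCI)
  assume "\<not> (\<forall>s\<in>nonempty_tasks k u - {t}. \<exists>g. direct u s t g)"
  then obtain s where s: "s \<in> {1..k}" "s \<noteq> t" "u s \<ge> 1" and no_direct: "\<nexists>g. direct u s t g"
    by (auto simp: nonempty_tasks_def)
  then obtain j b c where "relay u s t j b c" using direct_or_relay[OF u s(1) t s(2,3)] by blast
  hence "type2_with n k f t j c u" by (rule type2_with_of_relay[OF u t s])
  thus "type2 n k f t u" unfolding type2_def by blast
qed

lemma three_sources_two_direct_targets_absurd: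
  assumes u: "demand_vec n k u" and T: "T1 \<in> {1..k}" "T2 \<in> {1..k}" "T1 \<noteq> T2"
    and S: "S \<subseteq> nonempty_tasks k u - {T1, T2}" "card S \<ge> 3"
    and direct: "\<And>s T. s \<in> S \<Longrightarrow> T \<in> {T1, T2} \<Longrightarrow> \<exists>g. direct u s T g"
  shows False
proof -
  obtain a where a: "a \<in> S" using exists_notin_list[of "[]" S] S(2) by auto
  obtain b where b: "b \<in> S" "b \<noteq> a" using exists_notin_list[of "[a]" S] S(2) by auto
  obtain e where e: "e \<in> S" "e \<noteq> a" "e \<noteq> b" using exists_notin_list[of "[a, b]" S] S(2) by auto
  have abe: "\<exists>g. direct u s T g" if "s \<in> {a, b, e}" "T \<in> {T1, T2}" for s T
    using direct that a b e by blast
  have distinct: "distinct [a, b, e, T1, T2]" using a b e S(1) T(3) by auto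
  show False by (rule no_direct_triangle[OF u _ _ _ T(1,2) distinct abe]) (use a b e S(1) in auto)
qed

lemma type2_and_all_direct_absurd:
  assumes u: "demand_vec n k u" and N4: "card (nonempty_tasks k u) \<ge> 4"
    and E: "E \<in> {1..k}" "E \<notin> nonempty_tasks k u"
    and to_E: "\<And>s. s \<in> nonempty_tasks k u \<Longrightarrow> \<exists>g. direct u s E g"
    and H: "type2_with n k f T i c u" and "T \<noteq> E"
  shows False
proof -
  define N where "N = nonempty_tasks k u"
  have N: "\<And>s. s \<in> N \<longleftrightarrow> s \<in> {1..k} \<and> u s \<ge> 1" by (simp add: N_def nonempty_tasks_def)
  have T: "T \<in> {1..k}" using H unfolding type2_with_def by simp
  obtain x where x: "x \<in> N" "x \<noteq> T" "x \<noteq> i" using exists_notin_list[of "[T, i]" N] N4 N_def by auto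
  obtain y where y: "y \<in> N" "y \<noteq> T" "y \<noteq> i" "y \<noteq> x" using exists_notin_list[of "[T, i, x]" N] N4 N_def by auto
  obtain b where V: "relay u x T i b c" using relay_if_type2_with[OF u H] x N by auto
  have "i \<in> N" using demand_pos_if_assigned[OF u relayD(5,9)[OF V]] relayD(1)[OF V] N by simp
  obtain gx gy where Dx: "direct u x E gx" and Dy: "direct u y E gy" using to_E x(1) y(1) N_def by blast
  show False
    by (rule no_direct_pair_with_relay[OF u _ _ E(1) T _ _ _ _ _ _ _ _ Dx Dy V])
      (use x y E \<open>i \<in> N\<close> \<open>T \<noteq> E\<close> N N_def in auto)
qed

lemma type2_exists:
  assumes v: "demand_vec n k v" and k: "k \<ge> 5" and N4: "card (nonempty_tasks k v) \<ge> 4"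
  shows "\<exists>t. type2 n k f t v \<and> card (nonempty_tasks k v - {t}) \<ge> 4"
proof (rule ccontr)
  define N where "N = nonempty_tasks k v"
  have N: "\<And>s. s \<in> N \<longleftrightarrow> s \<in> {1..k} \<and> v s \<ge> 1" and fin: "finite N"
    by (auto simp: N_def nonempty_tasks_def)
  assume "\<not> ?thesis"
  hence all_direct: "\<exists>g. direct v s T g" if "T \<in> {1..k}" "card (N - {T}) \<ge> 4" "s \<in> N - {T}" for s T
    using type2_or_all_direct[OF v that(1)] that unfolding N_def by blast
  consider "card N \<ge> 5" | "card N = 4" using N4 unfolding N_def by linarith
  thus False
  proof cases
    case 1
    obtain T1 where T1: "T1 \<in> N" using exists_notin_list[of "[]" N] 1 by auto
    obtain T2 where T2: "T2 \<in> N" "T2 \<noteq> T1" using exists_notin_list[of "[T1]" N] 1 by auto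
    have "card (N - {T1, T2}) = card N - 2" using T1 T2 fin by (simp add: card_Diff_subset)
    hence card3: "card (N - {T1, T2}) \<ge> 3" using 1 by simp
    have "card (N - {T}) \<ge> 4" if "T \<in> N" for T using that 1 fin by (simp add: card_Diff_singleton_if)
    hence direct: "\<exists>g. direct v s T g" if "s \<in> N - {T1, T2}" "T \<in> {T1, T2}" for s T
      using all_direct[of T s] that T1 T2 N by auto
    show False
      by (rule three_sources_two_direct_targets_absurd[OF v _ _ T2(2)[symmetric] _ card3 direct])
        (use T1 T2 N N_def in auto)
  next
    case 2
    obtain E where E: "E \<in> {1..k}" "E \<notin> N"
      using exists_notin_list[of "sorted_list_of_set N" "{1..k}"] 2 k fin by auto
    obtain T where T: "T \<in> N" using exists_notin_list[of "[]" N] 2 by auto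
    have to_E: "\<exists>g. direct v s E g" if "s \<in> N" for s
      using all_direct[OF E(1)] that E 2 by (simp add: card_Diff_singleton_if)
    show False
    proof (cases "type2 n k f T v")
      case True
      then obtain i c where H: "type2_with n k f T i c v" unfolding type2_def by blast
      have "T \<noteq> E" using T E by auto
      show False
        by (rule type2_and_all_direct_absurd[OF v N4 _ _ _ H \<open>T \<noteq> E\<close>]) (use E to_E in \<open>auto simp: N_def\<close>)
    next
      case False
      hence to_T: "\<exists>g. direct v s T g" if "s \<in> N - {T}" for s
        using type2_or_all_direct[OF v] T N that unfolding N_def by blast
      have "N - {E, T} = N - {T}" using E by auto
      hence card3: "card (N - {E, T}) \<ge> 3" using 2 T fin by (simp add: card_Diff_singleton_if)
      have direct: "\<exists>g. direct v s T' g" if "s \<in> N - {E, T}" "T' \<in> {E, T}" for s T'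
        using to_E to_T that by auto
      show False
        by (rule three_sources_two_direct_targets_absurd[OF v E(1) _ _ _ card3 direct])
          (use T E N N_def in auto)
    qed
  qed
qed

lemma type2_intermediate_direct:
  assumes u: "demand_vec n k u" and H: "type2_with n k f t i a u"
    and s0: "s0 \<in> nonempty_tasks k u - {t, i}" and s1: "s1 \<in> nonempty_tasks k u - {t, i}" and "s0 \<noteq> s1"
  shows "direct u i t a"
proof -
  have ht: "t \<in> {1..k}" and hi: "i \<in> {1..k}" and ha: "a \<in> {1..n}" using H unfolding type2_with_def by auto
  have m0: "s0 \<in> {1..k}" "u s0 \<ge> 1" "s0 \<noteq> t" "s0 \<noteq> i"
    and m1: "s1 \<in> {1..k}" "u s1 \<ge> 1" "s1 \<noteq> t" "s1 \<noteq> i" using s0 s1 by (auto simp: nonempty_tasks_def)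
  obtain b0 where V0: "relay u s0 t i b0 a" using relay_if_type2_with[OF u H m0(1,4,3,2)] by blast
  obtain b1 where V1: "relay u s1 t i b1 a" using relay_if_type2_with[OF u H m1(1,4,3,2)] by blast
  have it: "i \<noteq> t" using relayD(3)[OF V0] .
  have vi: "u i \<ge> 1" by (rule demand_pos_if_assigned[OF u ha relayD(9)[OF V0]])
  from direct_or_relay[OF u hi ht it vi] show ?thesis
  proof
    assume "\<exists>g. direct u i t g"
    then obtain g where Dg: "direct u i t g" ..
    have "a = g"
      using direct_relay_same_target[OF u hi m0(1) ht m0(4)[symmetric] it m0(3) vi m0(2) Dg V0] by simp
    thus ?thesis using Dg by simp
  next
    assume "\<exists>j b c. relay u i t j b c"
    then obtain j b c where V: "relay u i t j b c" by blast
    have "j = s0"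
      using relay_relay_same_target[OF u hi m0(1) ht m0(4)[symmetric] it m0(3) vi m0(2) V V0] relayD(2)[OF V] by auto
    moreover have "j = s1"
      using relay_relay_same_target[OF u hi m1(1) ht m1(4)[symmetric] it m1(3) vi m1(2) V V1] relayD(2)[OF V] by auto
    ultimately show ?thesis using \<open>s0 \<noteq> s1\<close> by simp
  qed
qed

lemma direct_after_intermediate_move:
  assumes Dit: "direct u i t a" and V: "relay u s t i b a" and "s \<noteq> t" and vi: "u i \<ge> 1"
  shows "direct (move i t u) s i b"
proof -
  note d = directD[OF Dit] and r = relayD[OF V]
  have u': "move s i (move i t u) = move s t u" using r(2,3) \<open>s \<noteq> t\<close> vi by (intro ext) (auto simp: move_apply)
  have f_u': "f p (move i t u) = (if p = a then t else f p u)" if "p \<in> {1..n}" for p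
    using d(3,4) that by auto
  show ?thesis unfolding direct_def u'
  proof (intro conjI ballI impI)
    show "b \<in> {1..n}" "f b (move s t u) = i" using r(4,8) .
    show "f b (move i t u) = s" using f_u'[OF r(4)] r(6,7) by simp
  next
    fix p assume p: "p \<in> {1..n}" "p \<noteq> b"
    show "f p (move s t u) = f p (move i t u)"
      using r(10) r(11)[OF p] f_u'[OF p(1)] by (cases "p = a") auto
  qed
qed

lemma type2_with_of_three_direct_to_intermediate:
  assumes u: "demand_vec n k u" and it: "i \<in> {1..k}" "t \<in> {1..k}" "i \<noteq> t"
    and S: "S \<subseteq> nonempty_tasks k u - {i, t}" "card S \<ge> 3"
    and to_i: "\<And>s. s \<in> S \<Longrightarrow> \<exists>b. direct u s i b"
  shows "\<exists>c. type2_with n k f t i c u"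
proof -
  have S': "s \<in> {1..k}" "u s \<ge> 1" "s \<noteq> i" "s \<noteq> t" if "s \<in> S" for s
    using that S(1) by (auto simp: nonempty_tasks_def)
  have "\<exists>r\<in>S. \<nexists>g. direct u r t g"
  proof (rule ccontr)
    assume "\<not> ?thesis"
    hence "\<exists>g. direct u s T g" if "s \<in> S" "T \<in> {i, t}" for s T using that to_i by blast
    thus False using three_sources_two_direct_targets_absurd[OF u it S] by blast
  qed
  then obtain r where r: "r \<in> S" and no_direct: "\<nexists>g. direct u r t g" by blast
  obtain j b c where Vr: "relay u r t j b c"
    using direct_or_relay[OF u S'(1)[OF r] it(2) S'(4)[OF r] S'(2)[OF r]] no_direct by blast
  have "j = i"
  proof (rule ccontr)
    assume ji: "j \<noteq> i"
    obtain y where y: "y \<in> S" "y \<noteq> r" "y \<noteq> j" using exists_notin_list[of "[r, j]" S] S(2) by auto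
    obtain gr gy where Dr: "direct u r i gr" and Dy: "direct u y i gy" using to_i r y(1) by blast
    show False
      by (rule no_direct_pair_with_relay[OF u S'(1)[OF r] S'(1)[OF y(1)] it(1,2) _ S'(3)[OF r] S'(4)[OF r]
            S'(3)[OF y(1)] S'(4)[OF y(1)] it(3) S'(2)[OF r] S'(2)[OF y(1)] Dr Dy Vr y(3)[symmetric] ji])
        (use y(2) in simp)
  qed
  thus ?thesis using type2_with_of_relay[OF u it(2) S'(1,4,2)[OF r] Vr] by blast
qed

lemma type2_persists:
  assumes u: "demand_vec n k u" and H: "type2_with n k f t i a u"
    and N4: "card (nonempty_tasks k u - {t}) \<ge> 4"
  shows "\<exists>a'. type2_with n k f t i a' (move i t u)"
proof -
  define M where "M = nonempty_tasks k u - {t, i}"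
  have ht: "t \<in> {1..k}" and hi: "i \<in> {1..k}" using H unfolding type2_with_def by auto
  have M: "\<And>s. s \<in> M \<longleftrightarrow> s \<in> {1..k} \<and> u s \<ge> 1 \<and> s \<noteq> t \<and> s \<noteq> i"
    by (auto simp: M_def nonempty_tasks_def)
  have "card (nonempty_tasks k u - {t}) - card {i} \<le> card (nonempty_tasks k u - {t} - {i})"
    by (rule diff_card_le_card_Diff) simp
  moreover have "nonempty_tasks k u - {t} - {i} = M" by (auto simp: M_def)
  ultimately have M3: "card M \<ge> 3" using N4 by simp
  obtain s0 where s0: "s0 \<in> M" using exists_notin_list[of "[]" M] M3 by auto
  obtain s1 where s1: "s1 \<in> M" "s1 \<noteq> s0" using exists_notin_list[of "[s0]" M] M3 by auto
  have relays: "\<exists>b. relay u s t i b a" if "s \<in> M" for s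
  proof -
    have "s \<in> {1..k}" "s \<noteq> i" "s \<noteq> t" "u s \<ge> 1" using that M by auto
    thus ?thesis by (rule relay_if_type2_with[OF u H])
  qed
  obtain b0 where V0: "relay u s0 t i b0 a" using relays[OF s0] ..
  have it: "i \<noteq> t" using relayD(3)[OF V0] .
  have vi: "u i \<ge> 1" using demand_pos_if_assigned[OF u relayD(5,9)[OF V0]] .
  have Dit: "direct u i t a"
    by (rule type2_intermediate_direct[OF u H _ _ \<open>s1 \<noteq> s0\<close>[symmetric]]) (use s0 s1 M_def in simp_all)
  have to_i: "\<exists>b. direct (move i t u) s i b" if s: "s \<in> M" for s
  proof -
    obtain b where "relay u s t i b a" using relays[OF s] ..
    hence "direct (move i t u) s i b" by (rule direct_after_intermediate_move[OF Dit _ _ vi]) (use s M in simp)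
    thus ?thesis ..
  qed
  have "M \<subseteq> nonempty_tasks k (move i t u) - {i, t}" using M by (auto simp: nonempty_tasks_def move_apply)
  with type2_with_of_three_direct_to_intermediate[OF demand_vec_move[OF u hi ht it vi] hi ht it _ M3 to_i]
  show ?thesis by blast
qed

end

theorem lemma4p8:
  fixes n k :: nat and f :: "nat \<Rightarrow> (nat \<Rightarrow> nat) \<Rightarrow> nat" and v :: "nat \<Rightarrow> nat"
  assumes "n \<ge> 4" and "k \<ge> 5"
    and "satisfies_demand n k f"
    and "max_switching_cost_le n k f 2"
    and "demand_vec n k v"
    and "card (nonempty_tasks k v) \<ge> 4"
  shows "(\<exists>t. type2 n k f t v \<and> card (nonempty_tasks k v - {t}) \<ge> 4) \<and>
         (\<forall>t i a. type2_with n k f t i a v \<and> card (nonempty_tasks k v - {t}) \<ge> 4 \<longrightarrow>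
            (\<exists>a'. type2_with n k f t i a' (move i t v)))"
proof -
  interpret bounded_switching n k f using assms(3,4) by unfold_locales
  show ?thesis using type2_exists[OF assms(5,2,6)] type2_persists[OF assms(5)] by blast
qed

end
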